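(* Let $d\ge 1$ be an integer and let $G$ be a triangle-free graph on $n$ vertices with maximum degree $d$. Then for every $\lambda>0$, \[ \frac{1}{n}\overline{\alpha}_G(\lambda) \;\ge\; \frac{\lambda}{1+\lambda}\cdot\frac{W(d\log(1+\lambda))}{d\log(1+\lambda)}. \]
   Context: For a graph $G$ with set of independent sets $\mathcal I(G)$ and a fugacity $\lambda>0$, the hard-core model is the probability distribution on $\mathcal I(G)$ given by $\Pr[I]=\lambda^{|I|}/P_G(\lambda)$, where $P_G(\lambda)=\sum_{J\in\mathcal I(G)}\lambda^{|J|}$ is the partition function (independence polynomial). $\overline{\alpha}_G(\lambda)=\sum_{I\in\mathcal I(G)}|I|\Pr[I]=\lambda P_G'(\lambda)/P_G(\lambda)$ is the expected size of the random independent set, and $\frac1n\overline\alpha_G(\lambda)$ is the occupancy fraction. For $z>0$, $W(z)$ (the Lambert $W$ function) denotes the unique positive real with $W(z)e^{W(z)}=z$. Logarithms are natural. *)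

theory Defs
  imports "HOL-Analysis.Analysis"
begin

text \<open>Simple graphs: a finite vertex set V with a symmetric, irreflexive
  adjacency relation E (only its restriction to V matters).\<close>

definition simple_graph :: "'a set \<Rightarrow> ('a \<Rightarrow> 'a \<Rightarrow> bool) \<Rightarrow> bool" where
  "simple_graph V E \<longleftrightarrow> finite V \<and> (\<forall>u\<in>V. \<forall>v\<in>V. E u v \<longrightarrow> E v u) \<and> (\<forall>v\<in>V. \<not> E v v)"

definition degree :: "'a set \<Rightarrow> ('a \<Rightarrow> 'a \<Rightarrow> bool) \<Rightarrow> 'a \<Rightarrow> nat" where
  "degree V E v = card {u\<in>V. E v u}"

definition max_degree :: "'a set \<Rightarrow> ('a \<Rightarrow> 'a \<Rightarrow> bool) \<Rightarrow> nat" where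
  "max_degree V E = Max (degree V E ` V)"

definition triangle_free :: "'a set \<Rightarrow> ('a \<Rightarrow> 'a \<Rightarrow> bool) \<Rightarrow> bool" where
  "triangle_free V E \<longleftrightarrow> \<not> (\<exists>u\<in>V. \<exists>v\<in>V. \<exists>w\<in>V. E u v \<and> E v w \<and> E u w)"

definition independent_sets :: "'a set \<Rightarrow> ('a \<Rightarrow> 'a \<Rightarrow> bool) \<Rightarrow> 'a set set" where
  "independent_sets V E = {I. I \<subseteq> V \<and> (\<forall>u\<in>I. \<forall>v\<in>I. \<not> E u v)}"

definition partition_fn :: "'a set \<Rightarrow> ('a \<Rightarrow> 'a \<Rightarrow> bool) \<Rightarrow> real \<Rightarrow> real" where
  "partition_fn V E lam = (\<Sum>I\<in>independent_sets V E. lam ^ card I)"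

definition expected_size :: "'a set \<Rightarrow> ('a \<Rightarrow> 'a \<Rightarrow> bool) \<Rightarrow> real \<Rightarrow> real" where
  "expected_size V E lam =
     (\<Sum>I\<in>independent_sets V E. real (card I) * (lam ^ card I / partition_fn V E lam))"

definition lambertW :: "real \<Rightarrow> real" where
  "lambertW z = (THE w. w > 0 \<and> w * exp w = z)"

end

theory Submission
  imports Defs
begin

text \<open>
  Write \<open>c = \<lambda>/(1+\<lambda>)\<close> and, for a vertex v and an independent set I, let \<open>Y\<^sub>v(I)\<close> be the
  number of neighbours of v having no neighbour in I. A vertex lies in the random set with
  probability c times the probability that it is uncovered, and in a triangle-free graph the
  neighbourhood of v is independent, so conditioning on \<open>I - N(v)\<close> shows that v is uncovered
  with probability \<open>E[(1+\<lambda>)^-Y\<^sub>v]\<close>. The same identity summed over the neighbours of v gives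
  \<open>E|N(v) \<inter> I| = c E[Y\<^sub>v]\<close>, and summing over v bounds \<open>c \<Sum>\<^sub>v E[Y\<^sub>v]\<close> by \<open>d E|I|\<close>.
  Bounding the convex function \<open>(1+\<lambda>)^-y\<close> below by its tangent at the point where
  \<open>y ln(1+\<lambda>) = W(d ln(1+\<lambda>))\<close> turns these two relations into the stated lower bound.
\<close>

lemma times_exp_strict_mono:
  fixes a b :: real
  assumes "0 < a" "a < b"
  shows "a * exp a < b * exp b"
  using assms by (intro mult_strict_mono) auto

lemma times_exp_surj:
  fixes z :: real
  assumes "z > 0"
  obtains w where "w > 0" "w * exp w = z"
proof -
  have "\<exists>x. 0 \<le> x \<and> x \<le> z \<and> x * exp x = z"
    using IVT[of "\<lambda>x. x * exp x" 0 z z] assms by (auto intro!: continuous_intros)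
  then obtain x where "0 \<le> x" "x * exp x = z" by auto
  with assms have "x > 0" by (cases "x = 0") auto
  with \<open>x * exp x = z\<close> show thesis by (intro that)
qed

lemma lambertW_times_exp:
  fixes w :: real
  assumes "w > 0"
  shows "lambertW (w * exp w) = w"
  unfolding lambertW_def
proof (rule the_equality)
  fix y assume y: "0 < y \<and> y * exp y = w * exp w"
  show "y = w"
    using times_exp_strict_mono[of y w] times_exp_strict_mono[of w y] y assms
    by (cases y w rule: linorder_cases) auto
qed (use assms in auto)

lemma exp_ge_tangent:
  fixes a x :: real
  shows "exp a * (1 + (x - a)) \<le> exp x"
proof -
  have "exp a * (1 + (x - a)) \<le> exp a * exp (x - a)"
    by (intro mult_left_mono exp_ge_add_one_self) simp
  then show ?thesis by (simp add: exp_diff)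
qed

lemma sum_power_card_Pow:
  fixes a :: "'b :: comm_semiring_1"
  assumes "finite S"
  shows "(\<Sum>X\<in>Pow S. a ^ card X) = (1 + a) ^ card S"
  using prod_add[of S "\<lambda>_. a" "\<lambda>_. 1"] assms by (simp add: add.commute)

lemma sum_mult_card_filter_swap:
  fixes f :: "'b \<Rightarrow> 'c :: comm_semiring_1"
  assumes "finite X" "finite N"
  shows "(\<Sum>I\<in>X. f I * of_nat (card {u\<in>N. Q u I})) = (\<Sum>u\<in>N. \<Sum>I\<in>{I\<in>X. Q u I}. f I)"
proof -
  have "(\<Sum>I\<in>X. f I * of_nat (card {u\<in>N. Q u I})) = (\<Sum>I\<in>X. \<Sum>u\<in>N. if Q u I then f I else 0)"
    using assms(2) by (simp add: sum.inter_filter[symmetric] mult.commute)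
  also have "\<dots> = (\<Sum>u\<in>N. \<Sum>I\<in>X. if Q u I then f I else 0)"
    by (rule sum.swap)
  also have "\<dots> = (\<Sum>u\<in>N. \<Sum>I\<in>{I\<in>X. Q u I}. f I)"
    using assms(1) by (simp add: sum.inter_filter)
  finally show ?thesis .
qed

locale hardcore_model =
  fixes V :: "'a set" and E :: "'a \<Rightarrow> 'a \<Rightarrow> bool" and lam :: real
  assumes simple_graph: "simple_graph V E" and lam_pos: "lam > 0"
begin

abbreviation Ind :: "'a set set" where
  "Ind \<equiv> independent_sets V E"

definition nbhd :: "'a \<Rightarrow> 'a set" where
  "nbhd v = {u\<in>V. E v u}"

definition uncovered :: "'a set \<Rightarrow> 'a set" where
  "uncovered I = {u\<in>V. \<forall>x\<in>I. \<not> E u x}"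

definition occupied_weight :: "'a \<Rightarrow> real" where
  "occupied_weight u = (\<Sum>I\<in>{I\<in>Ind. u \<in> I}. lam ^ card I)"

definition uncovered_weight :: "'a \<Rightarrow> real" where
  "uncovered_weight u = (\<Sum>I\<in>{I\<in>Ind. u \<in> uncovered I}. lam ^ card I)"

definition weighted_size :: real where
  "weighted_size = (\<Sum>I\<in>Ind. lam ^ card I * card I)"

lemma finite_V: "finite V"
  using simple_graph by (simp add: simple_graph_def)

lemma E_sym: "u \<in> V \<Longrightarrow> v \<in> V \<Longrightarrow> E u v \<Longrightarrow> E v u"
  using simple_graph by (simp add: simple_graph_def)

lemma E_irrefl: "v \<in> V \<Longrightarrow> \<not> E v v"
  using simple_graph by (simp add: simple_graph_def)

lemma finite_Ind: "finite Ind"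
  by (rule finite_subset[of _ "Pow V"]) (auto simp: independent_sets_def finite_V)

lemma Ind_subset_V: "I \<in> Ind \<Longrightarrow> I \<subseteq> V"
  by (simp add: independent_sets_def)

lemma Ind_finite: "I \<in> Ind \<Longrightarrow> finite I"
  using Ind_subset_V finite_V finite_subset by blast

lemma Ind_not_adjacent: "I \<in> Ind \<Longrightarrow> u \<in> I \<Longrightarrow> x \<in> I \<Longrightarrow> \<not> E u x"
  by (simp add: independent_sets_def)

lemma Ind_subset: "I \<in> Ind \<Longrightarrow> J \<subseteq> I \<Longrightarrow> J \<in> Ind"
  by (auto simp: independent_sets_def)

lemma Un_Ind:
  assumes "I \<in> Ind" "J \<in> Ind" "J \<subseteq> uncovered I"
  shows "I \<union> J \<in> Ind"
  using assms E_sym Ind_subset_V unfolding independent_sets_def uncovered_def by blast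

lemma insert_Ind:
  assumes "I \<in> Ind" "u \<in> uncovered I"
  shows "insert u I \<in> Ind"
proof -
  have "{u} \<in> Ind"
    using assms(2) E_irrefl unfolding independent_sets_def uncovered_def by auto
  then show ?thesis
    using Un_Ind[OF assms(1), of "{u}"] assms(2) by simp
qed

lemma nbhd_Ind:
  assumes "triangle_free V E" "v \<in> V"
  shows "nbhd v \<in> Ind"
  using assms unfolding triangle_free_def independent_sets_def nbhd_def by blast

lemma partition_fn_ge_1: "partition_fn V E lam \<ge> 1"
proof -
  have "{} \<in> Ind" by (simp add: independent_sets_def)
  then have "lam ^ card ({} :: 'a set) \<le> (\<Sum>I\<in>Ind. lam ^ card I)"
    using finite_Ind lam_pos by (intro member_le_sum) auto
  then show ?thesis by (simp add: partition_fn_def)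
qed

lemma expected_size_eq: "expected_size V E lam = weighted_size / partition_fn V E lam"
  unfolding expected_size_def weighted_size_def
  by (simp add: sum_divide_distrib mult.commute)

lemma sum_occupied_weight: "(\<Sum>u\<in>V. occupied_weight u) = weighted_size"
proof -
  have "(\<Sum>u\<in>V. occupied_weight u) = (\<Sum>I\<in>Ind. lam ^ card I * card {u\<in>V. u \<in> I})"
    using sum_mult_card_filter_swap[OF finite_Ind finite_V, of "\<lambda>I. lam ^ card I" "\<lambda>u I. u \<in> I"]
    by (simp add: occupied_weight_def)
  also have "\<dots> = weighted_size"
    unfolding weighted_size_def
    by (intro sum.cong refl) (use Ind_subset_V in \<open>auto intro!: arg_cong[where f = card]\<close>)
  finally show ?thesis .
qed

text \<open>\<open>insert u\<close> maps the independent sets leaving u uncovered but not containing it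
  bijectively onto those containing u, and raises the weight by a factor \<open>\<lambda>\<close>.\<close>

lemma occupied_weight_eq:
  assumes u: "u \<in> V"
  shows "occupied_weight u = lam / (1 + lam) * uncovered_weight u"
proof -
  define B0 where "B0 = {I\<in>Ind. u \<notin> I \<and> u \<in> uncovered I}"
  define B1 where "B1 = {I\<in>Ind. u \<in> I}"
  have fin: "finite B0" "finite B1"
    unfolding B0_def B1_def using finite_Ind by auto
  have "{I\<in>Ind. u \<in> uncovered I} = B0 \<union> B1"
    using u Ind_not_adjacent unfolding B0_def B1_def uncovered_def by blast
  then have uncovered: "uncovered_weight u = (\<Sum>I\<in>B0. lam ^ card I) + occupied_weight u"
    unfolding uncovered_weight_def occupied_weight_def B1_def[symmetric]
    using fin by (simp add: sum.union_disjoint B0_def B1_def disjoint_iff)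
  have bij: "bij_betw (insert u) B0 B1"
  proof (rule bij_betw_byWitness[where f' = "\<lambda>J. J - {u}"])
    show "insert u ` B0 \<subseteq> B1"
      using insert_Ind unfolding B0_def B1_def by blast
    show "(\<lambda>J. J - {u}) ` B1 \<subseteq> B0"
      using Ind_subset Ind_not_adjacent u unfolding B0_def B1_def uncovered_def by blast
  qed (auto simp: B0_def B1_def)
  have "occupied_weight u = (\<Sum>I\<in>B0. lam ^ card (insert u I))"
    using sum.reindex_bij_betw[OF bij, of "\<lambda>I. lam ^ card I"]
    by (simp add: occupied_weight_def B1_def)
  also have "\<dots> = lam * (\<Sum>I\<in>B0. lam ^ card I)"
    unfolding sum_distrib_left by (intro sum.cong) (auto simp: B0_def Ind_finite)
  finally show ?thesis
    using uncovered lam_pos by (simp add: field_simps)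
qed

lemma nbhd_Int_uncovered_Un:
  assumes "triangle_free V E" "v \<in> V" "S \<subseteq> nbhd v"
  shows "nbhd v \<inter> uncovered (K \<union> S) = nbhd v \<inter> uncovered K"
  using assms unfolding triangle_free_def nbhd_def uncovered_def by blast

text \<open>Grouping independent sets by their part outside \<open>nbhd v\<close>: as \<open>nbhd v\<close> is independent,
  the fibre over K consists of K together with any set of neighbours of v left uncovered by K.\<close>

lemma Ind_fibre_eq:
  assumes tf: "triangle_free V E" and v: "v \<in> V"
    and K: "K \<in> Ind" "v \<in> uncovered K"
  shows "{I\<in>Ind. I - nbhd v = K} = (\<lambda>S. K \<union> S) ` Pow (nbhd v \<inter> uncovered K)"
proof (intro equalityI subsetI)
  fix I assume "I \<in> {I\<in>Ind. I - nbhd v = K}"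
  then have I: "I \<in> Ind" "I - nbhd v = K" by auto
  have "I \<inter> nbhd v \<subseteq> nbhd v \<inter> uncovered K"
    using I Ind_not_adjacent unfolding nbhd_def uncovered_def by blast
  moreover have "I = K \<union> (I \<inter> nbhd v)" using I by blast
  ultimately show "I \<in> (\<lambda>S. K \<union> S) ` Pow (nbhd v \<inter> uncovered K)" by blast
next
  fix I assume "I \<in> (\<lambda>S. K \<union> S) ` Pow (nbhd v \<inter> uncovered K)"
  then obtain S where S: "S \<subseteq> nbhd v \<inter> uncovered K" and I: "I = K \<union> S" by blast
  have "S \<in> Ind" using S Ind_subset[OF nbhd_Ind[OF tf v]] by blast
  then have "I \<in> Ind" using Un_Ind[OF K(1)] S I by blast
  moreover have "I - nbhd v = K"
    using I S K(2) Ind_subset_V[OF K(1)] unfolding nbhd_def uncovered_def by blast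
  ultimately show "I \<in> {I\<in>Ind. I - nbhd v = K}" by blast
qed

lemma sum_Ind_fibre:
  assumes tf: "triangle_free V E" and v: "v \<in> V"
    and K: "K \<in> Ind" "v \<in> uncovered K"
  shows "(\<Sum>I\<in>{I\<in>Ind. I - nbhd v = K}. lam ^ card I / (1 + lam) ^ card (nbhd v \<inter> uncovered I))
         = lam ^ card K"
proof -
  define U where "U = nbhd v \<inter> uncovered K"
  define g where "g I = lam ^ card I / (1 + lam) ^ card (nbhd v \<inter> uncovered I)" for I
  have fin: "finite U" "finite K"
    using finite_V Ind_finite[OF K(1)] by (auto simp: U_def nbhd_def)
  have disj: "K \<inter> U = {}"
    using K(2) unfolding U_def uncovered_def nbhd_def by auto
  have "inj_on (\<lambda>S. K \<union> S) (Pow U)"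
    using disj by (auto intro!: inj_onI)
  then have "(\<Sum>I\<in>{I\<in>Ind. I - nbhd v = K}. g I) = (\<Sum>S\<in>Pow U. g (K \<union> S))"
    by (simp add: Ind_fibre_eq[OF tf v K] U_def sum.reindex)
  also have "\<dots> = (\<Sum>S\<in>Pow U. lam ^ card K / (1 + lam) ^ card U * lam ^ card S)"
  proof (intro sum.cong refl)
    fix S assume S: "S \<in> Pow U"
    then have "card (K \<union> S) = card K + card S"
      using disj fin finite_subset by (intro card_Un_disjoint) auto
    then show "g (K \<union> S) = lam ^ card K / (1 + lam) ^ card U * lam ^ card S"
      using S nbhd_Int_uncovered_Un[OF tf v, of S K]
      by (auto simp: g_def U_def power_add)
  qed
  also have "\<dots> = lam ^ card K / (1 + lam) ^ card U * (1 + lam) ^ card U"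
    by (simp only: sum_distrib_left[symmetric] sum_power_card_Pow[OF fin(1)])
  also have "\<dots> = lam ^ card K"
    using lam_pos by simp
  finally show ?thesis by (simp add: g_def)
qed

lemma uncovered_weight_eq:
  assumes tf: "triangle_free V E" and v: "v \<in> V"
  shows "uncovered_weight v =
    (\<Sum>I\<in>Ind. lam ^ card I / (1 + lam) ^ card (nbhd v \<inter> uncovered I))"
proof -
  define D where "D = {K\<in>Ind. v \<in> uncovered K}"
  have "finite D" using finite_Ind by (simp add: D_def)
  moreover have "(\<lambda>I. I - nbhd v) ` Ind \<subseteq> D"
  proof (intro image_subsetI)
    fix I assume "I \<in> Ind"
    then show "I - nbhd v \<in> D"
      using Ind_subset[of I "I - nbhd v"] Ind_subset_V[of I] v
      unfolding D_def nbhd_def uncovered_def by auto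
  qed
  ultimately have "(\<Sum>I\<in>Ind. lam ^ card I / (1 + lam) ^ card (nbhd v \<inter> uncovered I))
      = (\<Sum>K\<in>D. \<Sum>I\<in>{I\<in>Ind. I - nbhd v = K}.
           lam ^ card I / (1 + lam) ^ card (nbhd v \<inter> uncovered I))"
    by (intro sum.group[OF finite_Ind, symmetric])
  also have "\<dots> = uncovered_weight v"
    by (simp add: sum_Ind_fibre[OF tf v] uncovered_weight_def D_def)
  finally show ?thesis ..
qed

lemma sum_nbhd_occupied:
  "(\<Sum>I\<in>Ind. lam ^ card I * card (nbhd v \<inter> I))
   = lam / (1 + lam) * (\<Sum>I\<in>Ind. lam ^ card I * card (nbhd v \<inter> uncovered I))"
proof -
  have fin: "finite (nbhd v)" using finite_V by (simp add: nbhd_def)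
  have "(\<Sum>I\<in>Ind. lam ^ card I * card (nbhd v \<inter> I)) = (\<Sum>u\<in>nbhd v. occupied_weight u)"
    using sum_mult_card_filter_swap[OF finite_Ind fin, of "\<lambda>I. lam ^ card I" "\<lambda>u I. u \<in> I"]
    by (simp add: occupied_weight_def Int_def)
  also have "\<dots> = lam / (1 + lam) * (\<Sum>u\<in>nbhd v. uncovered_weight u)"
    by (simp add: sum_distrib_left occupied_weight_eq nbhd_def)
  also have "(\<Sum>u\<in>nbhd v. uncovered_weight u)
             = (\<Sum>I\<in>Ind. lam ^ card I * card (nbhd v \<inter> uncovered I))"
    using sum_mult_card_filter_swap[OF finite_Ind fin, of "\<lambda>I. lam ^ card I" "\<lambda>u I. u \<in> uncovered I"]
    by (simp add: uncovered_weight_def Int_def)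
  finally show ?thesis .
qed

lemma sum_card_nbhd_Int_le:
  assumes "I \<subseteq> V"
  shows "(\<Sum>v\<in>V. card (nbhd v \<inter> I)) \<le> max_degree V E * card I"
proof -
  have fin: "finite I" using finite_subset[OF assms finite_V] .
  have count_out: "card (nbhd v \<inter> I) = (\<Sum>u\<in>I. if E v u then 1 else 0)" for v
  proof -
    have "nbhd v \<inter> I = {u\<in>I. E v u}" using assms by (auto simp: nbhd_def)
    then show ?thesis using fin by (simp add: sum.inter_filter[symmetric])
  qed
  have count_in: "card (nbhd u) = (\<Sum>v\<in>V. if E v u then 1 else 0)" if "u \<in> I" for u
  proof -
    have "nbhd u = {v\<in>V. E v u}" using that assms E_sym by (auto simp: nbhd_def)
    then show ?thesis using finite_V by (simp add: sum.inter_filter[symmetric])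
  qed
  have "(\<Sum>v\<in>V. card (nbhd v \<inter> I)) = (\<Sum>v\<in>V. \<Sum>u\<in>I. if E v u then 1 else 0)"
    by (simp add: count_out)
  also have "\<dots> = (\<Sum>u\<in>I. \<Sum>v\<in>V. if E v u then 1 else 0)"
    by (rule sum.swap)
  also have "\<dots> = (\<Sum>u\<in>I. card (nbhd u))"
    by (simp add: count_in)
  also have "\<dots> \<le> (\<Sum>u\<in>I. max_degree V E)"
    using assms finite_V unfolding max_degree_def
    by (intro sum_mono Max_ge) (auto simp: degree_def nbhd_def)
  finally show ?thesis by (simp add: mult.commute)
qed

lemma nbhd_occupancy_le:
  assumes "max_degree V E = d"
  shows "lam / (1 + lam) * (\<Sum>v\<in>V. \<Sum>I\<in>Ind. lam ^ card I * card (nbhd v \<inter> uncovered I))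
         \<le> d * weighted_size"
proof -
  have "lam / (1 + lam) * (\<Sum>v\<in>V. \<Sum>I\<in>Ind. lam ^ card I * card (nbhd v \<inter> uncovered I))
        = (\<Sum>v\<in>V. \<Sum>I\<in>Ind. lam ^ card I * card (nbhd v \<inter> I))"
    by (simp add: sum_distrib_left sum_nbhd_occupied)
  also have "\<dots> = (\<Sum>I\<in>Ind. lam ^ card I * (\<Sum>v\<in>V. card (nbhd v \<inter> I)))"
    unfolding of_nat_sum sum_distrib_left by (rule sum.swap)
  also have "\<dots> \<le> (\<Sum>I\<in>Ind. lam ^ card I * (real d * card I))"
  proof (intro sum_mono mult_left_mono)
    fix I assume "I \<in> Ind"
    then have "(\<Sum>v\<in>V. card (nbhd v \<inter> I)) \<le> d * card I"
      using sum_card_nbhd_Int_le Ind_subset_V assms by auto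
    then show "real (\<Sum>v\<in>V. card (nbhd v \<inter> I)) \<le> real d * real (card I)"
      by (metis of_nat_le_iff of_nat_mult)
  qed (use lam_pos in simp)
  also have "\<dots> = d * weighted_size"
    by (simp add: weighted_size_def sum_distrib_left ac_simps)
  finally show ?thesis .
qed

lemma weighted_size_ge_tangent:
  assumes tf: "triangle_free V E"
  shows "lam / (1 + lam) * exp (- a) *
           ((1 + a) * card V * partition_fn V E lam
            - ln (1 + lam) * (\<Sum>v\<in>V. \<Sum>I\<in>Ind. lam ^ card I * card (nbhd v \<inter> uncovered I)))
         \<le> weighted_size"
proof -
  define L where "L = ln (1 + lam)"
  have tangent: "exp (- a) * (1 + a - k * L) \<le> 1 / (1 + lam) ^ k" for k :: nat
  proof -
    have "(1 + lam) ^ k = exp (k * L)"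
      using lam_pos by (simp add: L_def exp_of_nat_mult)
    then show ?thesis
      using exp_ge_tangent[of "- a" "- (k * L)"] by (simp add: exp_minus field_simps)
  qed
  have "lam / (1 + lam) * exp (- a) *
          ((1 + a) * card V * partition_fn V E lam
           - L * (\<Sum>v\<in>V. \<Sum>I\<in>Ind. lam ^ card I * card (nbhd v \<inter> uncovered I)))
        = lam / (1 + lam) * (\<Sum>v\<in>V. \<Sum>I\<in>Ind.
            lam ^ card I * (exp (- a) * (1 + a - card (nbhd v \<inter> uncovered I) * L)))"
    by (simp add: partition_fn_def sum_distrib_left sum_subtractf algebra_simps)
  also have "\<dots> \<le> lam / (1 + lam) * (\<Sum>v\<in>V. \<Sum>I\<in>Ind.
            lam ^ card I * (1 / (1 + lam) ^ card (nbhd v \<inter> uncovered I)))"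
    using lam_pos tangent by (intro mult_left_mono sum_mono) auto
  also have "\<dots> = lam / (1 + lam) * (\<Sum>v\<in>V. uncovered_weight v)"
    by (simp add: uncovered_weight_eq[OF tf])
  also have "\<dots> = (\<Sum>v\<in>V. occupied_weight v)"
    by (simp add: sum_distrib_left occupied_weight_eq)
  also have "\<dots> = weighted_size"
    by (rule sum_occupied_weight)
  finally show ?thesis by (simp add: L_def)
qed

lemma expected_size_ge:
  assumes "triangle_free V E" "max_degree V E = d"
  shows "lam / (1 + lam) * exp (- a) * (1 + a) * card V
         \<le> expected_size V E lam * (1 + exp (- a) * d * ln (1 + lam))"
proof -
  define S where "S = (\<Sum>v\<in>V. \<Sum>I\<in>Ind. lam ^ card I * card (nbhd v \<inter> uncovered I))"
  define Z where "Z = partition_fn V E lam"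
  define c where "c = lam / (1 + lam)"
  define e where "e = exp (- a)"
  define L where "L = ln (1 + lam)"
  have "c * e * (1 + a) * card V * Z = c * e * ((1 + a) * card V * Z - L * S) + e * L * (c * S)"
    by (simp add: algebra_simps)
  also have "\<dots> \<le> weighted_size + e * L * (d * weighted_size)"
  proof (rule add_mono)
    show "c * e * ((1 + a) * card V * Z - L * S) \<le> weighted_size"
      using weighted_size_ge_tangent[OF assms(1), of a] by (simp add: c_def e_def L_def S_def Z_def)
    show "e * L * (c * S) \<le> e * L * (d * weighted_size)"
      using nbhd_occupancy_le[OF assms(2)] lam_pos
      by (intro mult_left_mono) (auto simp: c_def e_def L_def S_def)
  qed
  finally have "c * e * (1 + a) * card V * Z \<le> weighted_size * (1 + e * d * L)"
    by (simp add: algebra_simps)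
  moreover have "Z > 0" using partition_fn_ge_1 by (simp add: Z_def)
  ultimately show ?thesis
    by (simp add: expected_size_eq Z_def[symmetric] c_def e_def L_def field_simps)
qed

end

theorem theorem1p4:
  fixes V :: "'a set" and E :: "'a \<Rightarrow> 'a \<Rightarrow> bool" and d :: nat and lam :: real
  assumes "simple_graph V E"
    and "V \<noteq> {}"
    and "triangle_free V E"
    and "d \<ge> 1"
    and "max_degree V E = d"
    and "lam > 0"
  shows "expected_size V E lam / real (card V)
           \<ge> lam / (1 + lam) * (lambertW (real d * ln (1 + lam)) / (real d * ln (1 + lam)))"
proof -
  interpret hardcore_model V E lam
    using assms(1,6) by unfold_locales
  define L where "L = real d * ln (1 + lam)"
  have "L > 0" using assms(4,6) by (simp add: L_def)
  then obtain W where W: "W > 0" "W * exp W = L"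
    by (rule times_exp_surj)
  then have lambertW: "lambertW L = W"
    using lambertW_times_exp by blast
  have exp_W: "exp (- W) * L = W"
    using W by (simp add: exp_minus field_simps)
  then have exp_W_eq: "exp (- W) = W / L"
    using \<open>L > 0\<close> by (simp add: field_simps)
  have "lam / (1 + lam) * exp (- W) * card V * (1 + W) \<le> expected_size V E lam * (1 + W)"
    using expected_size_ge[OF assms(3,5), of W] exp_W by (simp add: L_def ac_simps)
  then have "lam / (1 + lam) * (W / L) * card V \<le> expected_size V E lam"
    unfolding exp_W_eq[symmetric] by (rule mult_right_le_imp_le) (use W(1) in simp)
  moreover have "card V > 0"
    using assms(2) finite_V by (simp add: card_gt_0_iff)
  ultimately show ?thesis
    unfolding L_def[symmetric] lambertW by (simp add: pos_le_divide_eq)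
qed

end
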